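(* Let $k$ be a positive integer, let $n$ and $m$ be integers with $0<m\le\binom{n}{2}$, and let $G$ be any ordered graph with vertex set $[n]$ (with the natural order) and exactly $m$ edges. Then \[ N_{\mathrm{ord}}(S_L(k), S_R(n,m)) \le N_{\mathrm{ord}}(S_L(k), G) \le N_{\mathrm{ord}}(S_L(k), S_L(n,m)). \]
   Context: An ordered graph is a graph together with a total order on its vertex set; here vertex sets are $[n]=\{1,\dots,n\}$ with the natural order. For an ordered graph $F$ on $[s]$ and an ordered graph $G$ on $[n]$, $N_{\mathrm{ord}}(F,G)$ is the number of sets $\{v_1,\dots,v_s\}\subseteq[n]$ with $v_1<\dots<v_s$ such that $\{v_i,v_j\}\in E(G)$ whenever $\{i,j\}\in E(F)$. For positive integers $n$ and $m\le\binom{n}{2}$, let $f(n,a)=\binom{a}{2}+a(n-a)$, let $a$ be the largest integer with $f(n,a)\le m$ (so $0\le a\le n$), and let $b=m-f(n,a)$. The ordered graph $S_L(n,m)$ has vertex set $[n]$ and edge set consisting of all pairs $\{v,w\}$ of distinct vertices with $v\in[a]$, $w\in[n]$, together with the edges $\{a+1,j\}$ for $a+2\le j\le a+b+1$; it has exactly $m$ edges. The ordered graph $S_R(n,m)$ is $S_L(n,m)$ with the vertex order reversed (equivalently, the ordered graph on $[n]$ obtained by relabeling each vertex $i$ of $S_L(n,m)$ as $n+1-i$). $S_L(k):=S_L(k+1,k)$ is the ordered star on $[k+1]$ with edges $\{1,j\}$ for $2\le j\le k+1$ (the center is the smallest vertex). Thus $N_{\mathrm{ord}}(S_L(k),G)=\sum_{i\in[n]}\binom{d^+_G(i)}{k}$,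 where $d^+_G(i)=|\{j>i:\{i,j\}\in E(G)\}|$. *)

theory Defs
  imports Main
begin

definition ordered_graph :: "nat \<Rightarrow> nat set set \<Rightarrow> bool" where
  "ordered_graph n E \<longleftrightarrow> (\<forall>e\<in>E. e \<subseteq> {1..n} \<and> card e = 2)"

text \<open>The i-th smallest element of V is  sorted_list_of_set V ! (i - 1).\<close>

definition N_ord :: "nat \<Rightarrow> nat set set \<Rightarrow> nat \<Rightarrow> nat set set \<Rightarrow> nat" where
  "N_ord s F n G = card {V. V \<subseteq> {1..n} \<and> card V = s \<and>
      (\<forall>i j. {i, j} \<in> F \<longrightarrow>
         {sorted_list_of_set V ! (i - 1), sorted_list_of_set V ! (j - 1)} \<in> G)}"

definition f_fun :: "nat \<Rightarrow> nat \<Rightarrow> nat" where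
  "f_fun n a = (a choose 2) + a * (n - a)"

definition a_par :: "nat \<Rightarrow> nat \<Rightarrow> nat" where
  "a_par n m = (GREATEST a. a \<le> n \<and> f_fun n a \<le> m)"

definition b_par :: "nat \<Rightarrow> nat \<Rightarrow> nat" where
  "b_par n m = m - f_fun n (a_par n m)"

definition S_L :: "nat \<Rightarrow> nat \<Rightarrow> nat set set" where
  "S_L n m = (let a = a_par n m; b = b_par n m in
     {{v, w} | v w. v \<in> {1..a} \<and> w \<in> {1..n} \<and> v \<noteq> w}
     \<union> {{a + 1, j} | j. a + 2 \<le> j \<and> j \<le> a + b + 1})"

definition S_R :: "nat \<Rightarrow> nat \<Rightarrow> nat set set" where
  "S_R n m = (\<lambda>e. (\<lambda>i. n + 1 - i) ` e) ` S_L n m"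

text \<open>The ordered star S_L(k) = S_L(k+1,k) on [k+1].\<close>

definition star_L :: "nat \<Rightarrow> nat set set" where
  "star_L k = S_L (k + 1) k"

end

theory Submission
  imports Defs
begin

(* Counting each copy of the star by its centre, the smallest vertex, gives
   N_ord(S_L(k), G) = sum_i C(d+(i), k), where d+(i) is the up-degree of i. Since x |-> C(x, k)
   is convex, it is a nonnegative combination of the hinge functions x |-> (x - s)+, so it
   suffices to compare the hinge sums sum_i (d+(i) - s)+ for every threshold s. Any graph on [n]
   with m edges has d+(i) <= n - i and sum_i d+(i) = m. In S_L(n,m) the first vertices have the
   largest possible up-degrees, which maximises every hinge sum; in S_R(n,m) every up-degree
   lies between min(n - i, a) and a + 1, i.e. the degrees are as balanced as the constraints
   allow, which minimises every hinge sum. *)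

section \<open>Binomial coefficients as sums of hinge functions\<close>

(* The second difference of s |-> s choose k at s; it is nonnegative, so the truncated
   subtraction is exact. *)
definition choose_hinge_coeff :: "nat \<Rightarrow> nat \<Rightarrow> nat" where
  "choose_hinge_coeff k s = (s choose (k - 1)) - (if s = 0 then 0 else (s - 1) choose (k - 1))"

lemma sum_choose_hinge_coeff: "(\<Sum>s<Suc x. choose_hinge_coeff k s) = x choose (k - 1)"
proof (induction x)
  case 0
  then show ?case by (simp add: choose_hinge_coeff_def)
next
  case (Suc x)
  have "x choose (k - 1) \<le> Suc x choose (k - 1)" by (simp add: binomial_right_mono)
  with Suc show ?case by (simp add: choose_hinge_coeff_def)
qed

lemma choose_eq_hinge_sum:
  assumes "k > 0" and "x \<le> N"
  shows "x choose k = (\<Sum>s<N. choose_hinge_coeff k s * (x - s))"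
  using assms(2)
proof (induction x)
  case 0
  then show ?case using assms(1) by simp
next
  case (Suc x)
  have "(\<Sum>s<N. choose_hinge_coeff k s * (Suc x - s))
      = (\<Sum>s<N. choose_hinge_coeff k s * (x - s)) + (\<Sum>s<N. if s \<le> x then choose_hinge_coeff k s else 0)"
    unfolding sum.distrib[symmetric] by (rule sum.cong) (auto simp: Suc_diff_le)
  also have "(\<Sum>s<N. if s \<le> x then choose_hinge_coeff k s else 0) = (\<Sum>s<Suc x. choose_hinge_coeff k s)"
    using Suc.prems by (intro sum.mono_neutral_cong_right) auto
  also have "\<dots> = x choose (k - 1)" by (rule sum_choose_hinge_coeff)
  finally show ?case using Suc assms(1) by (cases k) auto
qed

lemma sum_choose_le_if_hinge_sums_le:
  assumes "k > 0" and "finite I" and "\<And>i. i \<in> I \<Longrightarrow> d i \<le> N" and "\<And>i. i \<in> I \<Longrightarrow> D i \<le> N"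
    and hinge: "\<And>s. (\<Sum>i\<in>I. d i - s) \<le> (\<Sum>i\<in>I. D i - s)"
  shows "(\<Sum>i\<in>I. d i choose k) \<le> (\<Sum>i\<in>I. D i choose k)"
proof -
  have "(\<Sum>i\<in>I. d i choose k) = (\<Sum>s<N. choose_hinge_coeff k s * (\<Sum>i\<in>I. d i - s))"
    using choose_eq_hinge_sum[OF assms(1) assms(3)]
    by (simp add: sum_distrib_left sum.swap[of _ "{..<N}"])
  also have "\<dots> \<le> (\<Sum>s<N. choose_hinge_coeff k s * (\<Sum>i\<in>I. D i - s))"
    by (intro sum_mono mult_left_mono hinge) auto
  also have "\<dots> = (\<Sum>i\<in>I. D i choose k)"
    using choose_eq_hinge_sum[OF assms(1) assms(4)]
    by (simp add: sum_distrib_left sum.swap[of _ "{..<N}"])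
  finally show ?thesis .
qed

section \<open>Comparing hinge sums of degree sequences\<close>

lemma sum_le_sum_initial_if_antimono:
  fixes f :: "nat \<Rightarrow> 'a::ordered_comm_monoid_add"
  assumes "antimono f" and "finite P" and "0 \<notin> P"
  shows "(\<Sum>i\<in>P. f i) \<le> (\<Sum>i\<in>{1..card P}. f i)"
  using assms(2,3)
proof (induction P rule: finite_linorder_max_induct)
  case empty
  then show ?case by simp
next
  case (insert b A)
  have "A \<subseteq> {1..<b}" using insert by (auto simp: Suc_le_eq) (metis gr0I)
  then have "Suc (card A) \<le> b" using card_mono[of "{1..<b}" A] insert.prems by auto
  then have "f b \<le> f (Suc (card A))" using assms(1) by (simp add: antimonoD)
  moreover have "(\<Sum>i\<in>A. f i) \<le> (\<Sum>i\<in>{1..card A}. f i)" using insert by simp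
  ultimately have "f b + (\<Sum>i\<in>A. f i) \<le> f (Suc (card A)) + (\<Sum>i\<in>{1..card A}. f i)"
    by (rule add_mono)
  moreover have "b \<notin> A" using insert.hyps by auto
  ultimately show ?case using insert.hyps by (simp add: add.commute)
qed

lemma hinge_sum_le_if_subset_sums_le:
  fixes d D :: "nat \<Rightarrow> nat"
  assumes subset_sum: "\<And>P. P \<subseteq> {1..n} \<Longrightarrow> (\<Sum>i\<in>P. d i) \<le> (\<Sum>i\<in>{1..card P}. D i)"
  shows "(\<Sum>i\<in>{1..n}. d i - s) \<le> (\<Sum>i\<in>{1..n}. D i - s)"
proof -
  \<comment> \<open>Only the indices with d i > s contribute, and there the hinge sum is the subset sum
    minus card P * s.\<close>
  define P where "P = {i\<in>{1..n}. s < d i}"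
  have P: "P \<subseteq> {1..n}" "finite P" unfolding P_def by auto
  then have "card P \<le> n" using card_mono[of "{1..n}" P] by simp
  have "(\<Sum>i\<in>{1..n}. d i - s) = (\<Sum>i\<in>P. d i - s)"
    by (rule sum.mono_neutral_right) (auto simp: P_def)
  then have "(\<Sum>i\<in>{1..n}. d i - s) + card P * s = (\<Sum>i\<in>P. d i - s + s)"
    by (simp add: sum.distrib)
  also have "\<dots> = (\<Sum>i\<in>P. d i)" by (rule sum.cong) (auto simp: P_def)
  also have "\<dots> \<le> (\<Sum>i\<in>{1..card P}. D i)" using subset_sum P by blast
  also have "\<dots> \<le> (\<Sum>i\<in>{1..card P}. D i - s + s)" by (intro sum_mono) auto
  also have "\<dots> = (\<Sum>i\<in>{1..card P}. D i - s) + card P * s" by (simp add: sum.distrib)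
  also have "\<dots> \<le> (\<Sum>i\<in>{1..n}. D i - s) + card P * s"
    using \<open>card P \<le> n\<close> by (intro add_right_mono sum_mono2) auto
  finally show ?thesis by simp
qed

lemma f_fun_eq_sum:
  assumes "a \<le> n"
  shows "f_fun n a = (\<Sum>i\<in>{1..a}. n - i)"
  using assms
proof (induction a)
  case 0
  then show ?case by (simp add: f_fun_def)
next
  case (Suc a)
  then obtain t where n: "n = Suc a + t" using le_iff_add by blast
  have "f_fun n (Suc a) = f_fun n a + (n - Suc a)"
    unfolding f_fun_def n by (simp add: algebra_simps numeral_2_eq_2)
  with Suc show ?case by simp
qed

lemma hinge_sum_le_front_loaded:
  fixes d D :: "nat \<Rightarrow> nat"
  assumes d_le: "\<And>i. i \<in> {1..n} \<Longrightarrow> d i \<le> n - i"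
    and d_sum: "(\<Sum>i\<in>{1..n}. d i) \<le> f_fun n a + b" and "a \<le> n"
    and D_front: "\<And>i. i \<in> {1..a} \<Longrightarrow> n - i \<le> D i" and D_next: "a < n \<Longrightarrow> b \<le> D (Suc a)"
  shows "(\<Sum>i\<in>{1..n}. d i - s) \<le> (\<Sum>i\<in>{1..n}. D i - s)"
proof (rule hinge_sum_le_if_subset_sums_le)
  fix P
  assume P: "P \<subseteq> {1..n}"
  then have "finite P" and "card P \<le> n" using card_mono[of "{1..n}" P] finite_subset by auto
  show "(\<Sum>i\<in>P. d i) \<le> (\<Sum>i\<in>{1..card P}. D i)"
  proof (cases "card P \<le> a")
    case True
    have "(\<Sum>i\<in>P. d i) \<le> (\<Sum>i\<in>P. n - i)" using d_le P by (intro sum_mono) auto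
    also have "\<dots> \<le> (\<Sum>i\<in>{1..card P}. n - i)"
      using \<open>finite P\<close> P by (intro sum_le_sum_initial_if_antimono) (auto simp: antimono_def)
    also have "\<dots> \<le> (\<Sum>i\<in>{1..card P}. D i)" using True D_front by (intro sum_mono) auto
    finally show ?thesis .
  next
    case False
    \<comment> \<open>P is longer than the front, so the total edge budget is the binding bound.\<close>
    have "(\<Sum>i\<in>P. d i) \<le> (\<Sum>i\<in>{1..n}. d i)" using P by (intro sum_mono2) auto
    also have "\<dots> \<le> (\<Sum>i\<in>{1..a}. n - i) + b" using d_sum f_fun_eq_sum[OF \<open>a \<le> n\<close>] by simp
    also have "\<dots> \<le> (\<Sum>i\<in>{1..a}. D i) + D (Suc a)"
      using D_front D_next False \<open>card P \<le> n\<close> by (intro add_mono sum_mono) auto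
    also have "\<dots> = (\<Sum>i\<in>{1..Suc a}. D i)" by simp
    also have "\<dots> \<le> (\<Sum>i\<in>{1..card P}. D i)" using False by (intro sum_mono2) auto
    finally show ?thesis .
  qed
qed

lemma hinge_sum_ge_balanced:
  fixes d E :: "nat \<Rightarrow> nat"
  assumes d_le: "\<And>i. i \<in> {1..n} \<Longrightarrow> d i \<le> n - i"
    and sums: "(\<Sum>i\<in>{1..n}. E i) \<le> (\<Sum>i\<in>{1..n}. d i)"
    and E_lower: "\<And>i. i \<in> {1..n} \<Longrightarrow> min (n - i) a \<le> E i"
    and E_upper: "\<And>i. i \<in> {1..n} \<Longrightarrow> E i \<le> Suc a"
  shows "(\<Sum>i\<in>{1..n}. E i - s) \<le> (\<Sum>i\<in>{1..n}. d i - s)"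
proof (cases "a < s")
  case True
  then have "(\<Sum>i\<in>{1..n}. E i - s) = 0" using E_upper by fastforce
  then show ?thesis by simp
next
  case False
  \<comment> \<open>x - s = x - min x s, and for s \<le> a the capped values of E dominate those of d.\<close>
  have split: "(\<Sum>i\<in>{1..n}. x i - s) + (\<Sum>i\<in>{1..n}. min (x i) s) = (\<Sum>i\<in>{1..n}. x i)"
    for x :: "nat \<Rightarrow> nat"
    unfolding sum.distrib[symmetric] by (rule sum.cong) auto
  have "(\<Sum>i\<in>{1..n}. min (d i) s) \<le> (\<Sum>i\<in>{1..n}. min (E i) s)"
  proof (rule sum_mono)
    fix i
    assume i: "i \<in> {1..n}"
    have "min (d i) s \<le> min (n - i) s" using d_le[OF i] by simp
    also have "\<dots> \<le> min (E i) s" using E_lower[OF i] False by simp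
    finally show "min (d i) s \<le> min (E i) s" .
  qed
  then show ?thesis using split[of d] split[of E] sums by linarith
qed

section \<open>Up-degrees\<close>

definition up_nbrs :: "nat set set \<Rightarrow> nat \<Rightarrow> nat \<Rightarrow> nat set" where
  "up_nbrs G n i = {j. i < j \<and> j \<le> n \<and> {i, j} \<in> G}"

lemma up_nbrs_subset: "up_nbrs G n i \<subseteq> {Suc i..n}"
  unfolding up_nbrs_def by auto

lemma finite_up_nbrs [simp]: "finite (up_nbrs G n i)"
  by (rule finite_subset[OF up_nbrs_subset]) simp

lemma card_up_nbrs_le: "card (up_nbrs G n i) \<le> n - i"
  using card_mono[OF finite_atLeastAtMost up_nbrs_subset] by simp

lemma sum_card_up_nbrs:
  assumes "ordered_graph n G"
  shows "(\<Sum>i\<in>{1..n}. card (up_nbrs G n i)) = card G"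
proof -
  let ?edge = "\<lambda>(i, j). {i, j} :: nat set"
  have inj: "inj_on ?edge (SIGMA i:{1..n}. up_nbrs G n i)"
    by (rule inj_onI) (auto simp: up_nbrs_def doubleton_eq_iff)
  have image: "?edge ` (SIGMA i:{1..n}. up_nbrs G n i) = G"
  proof (intro equalityI subsetI)
    fix e
    assume "e \<in> ?edge ` (SIGMA i:{1..n}. up_nbrs G n i)"
    then show "e \<in> G" by (auto simp: up_nbrs_def)
  next
    fix e
    assume "e \<in> G"
    then have "e \<subseteq> {1..n}" "card e = 2" using assms unfolding ordered_graph_def by auto
    then obtain x y where xy: "e = {x, y}" "x \<noteq> y" "x \<in> {1..n}" "y \<in> {1..n}"
      unfolding card_2_iff by blast
    then have "e = ?edge (min x y, max x y)"
      by (cases "x \<le> y") (auto simp: min_def max_def insert_commute)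
    moreover have "(min x y, max x y) \<in> (SIGMA i:{1..n}. up_nbrs G n i)"
      using xy \<open>e \<in> G\<close> by (cases "x \<le> y") (auto simp: up_nbrs_def min_def max_def insert_commute)
    ultimately show "e \<in> ?edge ` (SIGMA i:{1..n}. up_nbrs G n i)" by blast
  qed
  show ?thesis using card_image[OF inj] image by simp
qed

lemma finite_ordered_graph: "ordered_graph n G \<Longrightarrow> finite G"
  unfolding ordered_graph_def by (rule finite_subset[of _ "Pow {1..n}"]) auto

definition reflect :: "nat \<Rightarrow> nat \<Rightarrow> nat" where
  "reflect n i = n + 1 - i"

lemma reflect_reflect: "i \<le> n \<Longrightarrow> reflect n (reflect n i) = i"
  unfolding reflect_def by simp

lemma ordered_graph_reflect:
  assumes "ordered_graph n G"
  shows "ordered_graph n (image (reflect n) ` G)"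
  unfolding ordered_graph_def
proof
  fix e'
  assume "e' \<in> image (reflect n) ` G"
  then obtain e where "e \<in> G" and e': "e' = reflect n ` e" by blast
  then have e: "e \<subseteq> {1..n}" "card e = 2" using assms unfolding ordered_graph_def by auto
  have "inj_on (reflect n) e"
    by (rule inj_on_inverseI[where g = "reflect n"]) (use e(1) reflect_reflect in auto)
  then have "card e' = 2" using e' e(2) by (simp add: card_image)
  moreover have "reflect n ` {1..n} \<subseteq> {1..n}" by (auto simp: reflect_def)
  then have "e' \<subseteq> {1..n}" using image_mono[OF e(1), of "reflect n"] e' by blast
  ultimately show "e' \<subseteq> {1..n} \<and> card e' = 2" by simp
qed

section \<open>The extremal graphs\<close>

lemma f_fun_mono:
  assumes "a \<le> a'" and "a' \<le> n"
  shows "f_fun n a \<le> f_fun n a'"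
  using assms by (simp add: f_fun_eq_sum sum_mono2)

lemma
  shows a_par_le: "a_par n m \<le> n"
    and f_fun_a_par_le: "f_fun n (a_par n m) \<le> m"
    and less_f_fun_Suc_a_par: "a_par n m < n \<Longrightarrow> m < f_fun n (Suc (a_par n m))"
proof -
  let ?P = "\<lambda>a. a \<le> n \<and> f_fun n a \<le> m"
  have "?P 0" by (simp add: f_fun_def numeral_2_eq_2)
  then show "a_par n m \<le> n" and "f_fun n (a_par n m) \<le> m"
    unfolding a_par_def using GreatestI_nat[of ?P 0 n] by auto
  show "m < f_fun n (Suc (a_par n m))" if "a_par n m < n"
    using that Greatest_le_nat[of ?P "Suc (a_par n m)" n] unfolding a_par_def by fastforce
qed

lemma a_par_eqI:
  assumes "a \<le> n" and "f_fun n a \<le> m" and "a < n \<Longrightarrow> m < f_fun n (Suc a)"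
  shows "a_par n m = a"
  unfolding a_par_def
proof (rule Greatest_equality)
  fix y
  assume y: "y \<le> n \<and> f_fun n y \<le> m"
  show "y \<le> a"
  proof (rule ccontr)
    assume "\<not> y \<le> a"
    then have "f_fun n (Suc a) \<le> f_fun n y" using y by (intro f_fun_mono) auto
    with y assms(3) \<open>\<not> y \<le> a\<close> show False by auto
  qed
qed (use assms in auto)

lemma f_fun_a_par_add_b_par: "f_fun n (a_par n m) + b_par n m = m"
  using f_fun_a_par_le unfolding b_par_def by simp

lemma a_par_add_b_par_less:
  assumes "a_par n m < n"
  shows "a_par n m + b_par n m + 1 < n"
proof -
  have "f_fun n (Suc (a_par n m)) = f_fun n (a_par n m) + (n - Suc (a_par n m))"
    using assms by (simp add: f_fun_eq_sum)
  then show ?thesis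
    using assms less_f_fun_Suc_a_par f_fun_a_par_add_b_par[of n m] by fastforce
qed

lemma b_par_eq_0_if_a_par_eq:
  assumes "m \<le> n choose 2" and "a_par n m = n"
  shows "b_par n m = 0"
  using assms unfolding b_par_def f_fun_def by simp

lemma mem_S_L:
  "e \<in> S_L n m \<longleftrightarrow>
     (\<exists>v w. e = {v, w} \<and> v \<in> {1..a_par n m} \<and> w \<in> {1..n} \<and> v \<noteq> w) \<or>
     (\<exists>j. e = {a_par n m + 1, j} \<and> a_par n m + 2 \<le> j \<and> j \<le> a_par n m + b_par n m + 1)"
  unfolding S_L_def Let_def by blast

lemma ordered_graph_S_L:
  assumes "m \<le> n choose 2"
  shows "ordered_graph n (S_L n m)"
  unfolding ordered_graph_def
proof
  fix e
  assume "e \<in> S_L n m"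
  then consider (front) v w where "e = {v, w}" "v \<in> {1..a_par n m}" "w \<in> {1..n}" "v \<noteq> w"
    | (after) j where "e = {a_par n m + 1, j}" "a_par n m + 2 \<le> j" "j \<le> a_par n m + b_par n m + 1"
    unfolding mem_S_L by blast
  then show "e \<subseteq> {1..n} \<and> card e = 2"
  proof cases
    case front
    then show ?thesis using a_par_le[of n m] by auto
  next
    case after
    then have "a_par n m < n" using assms a_par_le[of n m] b_par_eq_0_if_a_par_eq by fastforce
    with after show ?thesis using a_par_add_b_par_less[of n m] by auto
  qed
qed

lemma card_up_nbrs_S_L_front:
  assumes "i \<in> {1..a_par n m}"
  shows "n - i \<le> card (up_nbrs (S_L n m) n i)"
proof -
  have "{i, j} \<in> S_L n m" if "j \<in> {Suc i..n}" for j
    using assms that unfolding mem_S_L by (intro disjI1 exI[of _ i] exI[of _ j]) auto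
  then have "{Suc i..n} \<subseteq> up_nbrs (S_L n m) n i"
    unfolding up_nbrs_def by auto
  then show ?thesis using card_mono[of _ "{Suc i..n}"] by fastforce
qed

lemma card_up_nbrs_S_L_next:
  assumes "a_par n m < n"
  shows "b_par n m \<le> card (up_nbrs (S_L n m) n (Suc (a_par n m)))"
proof -
  have "{a_par n m + 1, j} \<in> S_L n m" if "j \<in> {a_par n m + 2..a_par n m + b_par n m + 1}" for j
    using that unfolding mem_S_L by auto
  then have "{a_par n m + 2..a_par n m + b_par n m + 1} \<subseteq> up_nbrs (S_L n m) n (Suc (a_par n m))"
    using a_par_add_b_par_less[OF assms] unfolding up_nbrs_def by auto
  then show ?thesis using card_mono[of _ "{a_par n m + 2..a_par n m + b_par n m + 1}"] by fastforce
qed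

lemma card_up_nbrs_S_L_back:
  assumes "a_par n m < i"
  shows "card (up_nbrs (S_L n m) n i) \<le> (if i = Suc (a_par n m) then b_par n m else 0)"
proof -
  let ?a = "a_par n m" and ?b = "b_par n m"
  have "i = Suc ?a \<and> j \<in> {?a + 2..?a + ?b + 1}" if "j \<in> up_nbrs (S_L n m) n i" for j
  proof -
    from that have "i < j" "{i, j} \<in> S_L n m" unfolding up_nbrs_def by auto
    then consider (front) v w where "{i, j} = {v, w}" "v \<in> {1..?a}"
      | (after) j' where "{i, j} = {?a + 1, j'}" "?a + 2 \<le> j'" "j' \<le> ?a + ?b + 1"
      unfolding mem_S_L by blast
    then show ?thesis
      by cases (use assms \<open>i < j\<close> in \<open>auto simp: doubleton_eq_iff\<close>)
  qed
  then have "up_nbrs (S_L n m) n i \<subseteq> (if i = Suc ?a then {?a + 2..?a + ?b + 1} else {})"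
    by auto
  from card_mono[OF _ this] show ?thesis by (auto split: if_splits)
qed

lemma card_S_L_le:
  assumes "m \<le> n choose 2"
  shows "card (S_L n m) \<le> m"
proof -
  let ?a = "a_par n m" and ?b = "b_par n m"
  have "card (S_L n m) = (\<Sum>i\<in>{1..n}. card (up_nbrs (S_L n m) n i))"
    using sum_card_up_nbrs[OF ordered_graph_S_L[OF assms]] by simp
  also have "\<dots> \<le> (\<Sum>i\<in>{1..n}. (if i \<le> ?a then n - i else 0) + (if i = Suc ?a then ?b else 0))"
  proof (rule sum_mono)
    fix i
    show "card (up_nbrs (S_L n m) n i) \<le> (if i \<le> ?a then n - i else 0) + (if i = Suc ?a then ?b else 0)"
      using card_up_nbrs_le[of "S_L n m" n i] card_up_nbrs_S_L_back[of n m i] by auto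
  qed
  also have "\<dots> \<le> (\<Sum>i\<in>{1..?a}. n - i) + ?b"
  proof -
    have "(\<Sum>i\<in>{1..n}. if i \<le> ?a then n - i else 0) = (\<Sum>i\<in>{1..?a}. n - i)"
      using a_par_le[of n m] by (intro sum.mono_neutral_cong_right) auto
    moreover have "(\<Sum>i\<in>{1..n}. if i = Suc ?a then ?b else 0) \<le> ?b" by (simp add: sum.delta)
    ultimately show ?thesis by (simp add: sum.distrib)
  qed
  also have "\<dots> = m"
    using f_fun_eq_sum[OF a_par_le] f_fun_a_par_add_b_par[of n m] by simp
  finally show ?thesis .
qed

lemma S_R_eq: "S_R n m = image (reflect n) ` S_L n m"
  unfolding S_R_def reflect_def ..

lemma ordered_graph_S_R: "m \<le> n choose 2 \<Longrightarrow> ordered_graph n (S_R n m)"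
  unfolding S_R_eq by (intro ordered_graph_reflect ordered_graph_S_L)

lemma card_S_R_le:
  assumes "m \<le> n choose 2"
  shows "card (S_R n m) \<le> m"
proof -
  have "finite (S_L n m)" using finite_ordered_graph[OF ordered_graph_S_L[OF assms]] .
  then have "card (S_R n m) \<le> card (S_L n m)" unfolding S_R_eq by (rule card_image_le)
  with card_S_L_le[OF assms] show ?thesis by simp
qed

lemma S_L_edge_meets_front:
  assumes "e \<in> S_L n m"
  shows "\<exists>z\<in>e. z \<le> Suc (a_par n m)"
  using assms unfolding mem_S_L by auto

lemma card_up_nbrs_S_R_le: "card (up_nbrs (S_R n m) n x) \<le> Suc (a_par n m)"
proof -
  have "up_nbrs (S_R n m) n x \<subseteq> {n - a_par n m..n}"
  proof
    fix y
    assume y: "y \<in> up_nbrs (S_R n m) n x"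
    then obtain e where "e \<in> S_L n m" and e: "{x, y} = reflect n ` e"
      unfolding up_nbrs_def S_R_eq by auto
    then obtain z where "z \<in> e" and "z \<le> Suc (a_par n m)" using S_L_edge_meets_front by blast
    have "reflect n z \<in> {x, y}" using e \<open>z \<in> e\<close> by blast
    then have "reflect n z \<le> y" using y unfolding up_nbrs_def by auto
    with \<open>z \<le> Suc (a_par n m)\<close> y show "y \<in> {n - a_par n m..n}"
      unfolding up_nbrs_def reflect_def by auto
  qed
  from card_mono[OF finite_atLeastAtMost this] show ?thesis by simp
qed

lemma card_up_nbrs_S_R_ge:
  assumes "x \<in> {1..n}"
  shows "min (n - x) (a_par n m) \<le> card (up_nbrs (S_R n m) n x)"
proof -
  let ?a = "a_par n m"
  have "{x, y} \<in> S_R n m" if y: "y \<in> {max (Suc x) (n + 1 - ?a)..n}" for y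
  proof -
    have "{reflect n y, reflect n x} \<in> S_L n m"
      using y assms a_par_le[of n m] unfolding mem_S_L
      by (intro disjI1 exI[of _ "reflect n y"] exI[of _ "reflect n x"]) (auto simp: reflect_def)
    moreover have "reflect n ` {reflect n y, reflect n x} = {x, y}"
      using y assms by (simp add: reflect_reflect insert_commute)
    ultimately show ?thesis unfolding S_R_eq by (metis image_eqI)
  qed
  then have "{max (Suc x) (n + 1 - ?a)..n} \<subseteq> up_nbrs (S_R n m) n x"
    unfolding up_nbrs_def by auto
  from card_mono[OF finite_up_nbrs this] show ?thesis
    using a_par_le[of n m] assms by simp
qed

section \<open>Counting ordered stars\<close>

lemma star_L_eq:
  assumes "k > 0"
  shows "star_L k = {{1, w} | w. 2 \<le> w \<and> w \<le> k + 1}"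
proof (cases "k = 1")
  case True
  have "a_par 2 1 = 2" by (rule a_par_eqI) (auto simp: f_fun_def)
  moreover have "b_par 2 1 = 0" unfolding b_par_def calculation by (simp add: f_fun_def)
  ultimately show ?thesis
    unfolding True star_L_def S_L_def Let_def
    by (auto simp: doubleton_eq_iff numeral_2_eq_2 le_Suc_eq insert_commute)
next
  case False
  with assms have "k \<ge> 2" by simp
  then have "a_par (k + 1) k = 1" by (intro a_par_eqI) (auto simp: f_fun_def numeral_2_eq_2)
  moreover have "b_par (k + 1) k = 0" unfolding b_par_def calculation by (simp add: f_fun_def)
  ultimately show ?thesis
    unfolding star_L_def S_L_def Let_def by (auto simp: doubleton_eq_iff insert_commute)
qed

lemma star_copy_iff:
  assumes "k > 0" and "finite V" and "card V = k + 1"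
  shows "(\<forall>i j. {i, j} \<in> star_L k \<longrightarrow>
            {sorted_list_of_set V ! (i - 1), sorted_list_of_set V ! (j - 1)} \<in> G)
    \<longleftrightarrow> (\<forall>w\<in>V - {Min V}. {Min V, w} \<in> G)"
proof -
  define L where "L = sorted_list_of_set (V - {Min V})"
  have "V \<noteq> {}" using assms(3) by auto
  then have sorted: "sorted_list_of_set V = Min V # L"
    unfolding L_def by (rule sorted_list_of_set_nonempty[OF assms(2)])
  have "Min V \<in> V" using assms(2) \<open>V \<noteq> {}\<close> by simp
  then have L: "length L = k" "set L = V - {Min V}"
    unfolding L_def using assms(2,3) by auto
  have star: "{i, j} \<in> star_L k \<longleftrightarrow> (\<exists>w. 2 \<le> w \<and> w \<le> k + 1 \<and> {i, j} = {1, w})" for i j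
    using star_L_eq[OF assms(1)] by auto
  show ?thesis
  proof
    assume H: "\<forall>i j. {i, j} \<in> star_L k \<longrightarrow>
            {sorted_list_of_set V ! (i - 1), sorted_list_of_set V ! (j - 1)} \<in> G"
    show "\<forall>w\<in>V - {Min V}. {Min V, w} \<in> G"
    proof
      fix w
      assume "w \<in> V - {Min V}"
      then have "w \<in> set L" using L by simp
      then obtain u where "u < k" "L ! u = w" using L(1) unfolding in_set_conv_nth by blast
      moreover have "{1, u + 2} \<in> star_L k" unfolding star using \<open>u < k\<close> by (intro exI[of _ "u + 2"]) auto
      ultimately show "{Min V, w} \<in> G" using H[rule_format, of 1 "u + 2"] sorted by simp
    qed
  next
    assume H: "\<forall>w\<in>V - {Min V}. {Min V, w} \<in> G"
    show "\<forall>i j. {i, j} \<in> star_L k \<longrightarrow>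
            {sorted_list_of_set V ! (i - 1), sorted_list_of_set V ! (j - 1)} \<in> G"
    proof (intro allI impI)
      fix i j
      assume "{i, j} \<in> star_L k"
      then obtain w where w: "2 \<le> w" "w \<le> k + 1" "{i, j} = {1, w}" unfolding star by blast
      then have "sorted_list_of_set V ! (w - 1) = L ! (w - 2)"
        unfolding sorted by (cases w) (auto simp: numeral_2_eq_2)
      moreover have "L ! (w - 2) \<in> set L" by (rule nth_mem) (use w L(1) in simp)
      ultimately have "{sorted_list_of_set V ! 0, sorted_list_of_set V ! (w - 1)} \<in> G"
        using H sorted L(2) by simp
      moreover have "i = 1 \<and> j = w \<or> i = w \<and> j = 1" using w(3) by (simp add: doubleton_eq_iff)
      ultimately show "{sorted_list_of_set V ! (i - 1), sorted_list_of_set V ! (j - 1)} \<in> G"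
        by (elim disjE) (simp_all add: insert_commute)
    qed
  qed
qed

lemma star_copies_eq:
  assumes "k > 0"
  shows "{V. V \<subseteq> {1..n} \<and> card V = k + 1 \<and>
            (\<forall>i j. {i, j} \<in> star_L k \<longrightarrow>
               {sorted_list_of_set V ! (i - 1), sorted_list_of_set V ! (j - 1)} \<in> G)}
    = (\<Union>i\<in>{1..n}. insert i ` {W. W \<subseteq> up_nbrs G n i \<and> card W = k})"
proof (intro equalityI subsetI)
  fix V
  assume "V \<in> {V. V \<subseteq> {1..n} \<and> card V = k + 1 \<and>
            (\<forall>i j. {i, j} \<in> star_L k \<longrightarrow>
               {sorted_list_of_set V ! (i - 1), sorted_list_of_set V ! (j - 1)} \<in> G)}"
  then have V: "V \<subseteq> {1..n}" "card V = k + 1" "finite V"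
    and copy: "\<forall>i j. {i, j} \<in> star_L k \<longrightarrow>
               {sorted_list_of_set V ! (i - 1), sorted_list_of_set V ! (j - 1)} \<in> G"
    by (auto intro: finite_subset[OF _ finite_atLeastAtMost])
  then have "V \<noteq> {}" by auto
  with V(3) have "Min V \<in> V" by simp
  have "\<forall>w\<in>V - {Min V}. {Min V, w} \<in> G" using copy star_copy_iff[OF assms V(3,2)] by blast
  then have "V - {Min V} \<subseteq> up_nbrs G n (Min V)"
    using V(1,3) unfolding up_nbrs_def by (auto simp: order.not_eq_order_implies_strict)
  moreover have "card (V - {Min V}) = k" using V(2,3) \<open>Min V \<in> V\<close> by simp
  moreover have "V = insert (Min V) (V - {Min V})" using \<open>Min V \<in> V\<close> by blast
  ultimately show "V \<in> (\<Union>i\<in>{1..n}. insert i ` {W. W \<subseteq> up_nbrs G n i \<and> card W = k})"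
    using \<open>Min V \<in> V\<close> V(1) by blast
next
  fix V
  assume "V \<in> (\<Union>i\<in>{1..n}. insert i ` {W. W \<subseteq> up_nbrs G n i \<and> card W = k})"
  then obtain i W where i: "i \<in> {1..n}" and W: "W \<subseteq> up_nbrs G n i" "card W = k"
    and V: "V = insert i W"
    by blast
  have "finite W" using W(1) by (rule finite_subset) simp
  have "\<forall>w\<in>W. i < w \<and> w \<le> n \<and> {i, w} \<in> G" using W(1) unfolding up_nbrs_def by blast
  then have "i \<notin> W" and "V \<subseteq> {1..n}" using V i by auto
  have "Min V = i"
    using V \<open>finite W\<close> \<open>\<forall>w\<in>W. i < w \<and> w \<le> n \<and> {i, w} \<in> G\<close> by (intro Min_eqI) auto
  moreover have "card V = k + 1" and "finite V" using V W(2) \<open>finite W\<close> \<open>i \<notin> W\<close> by auto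
  moreover have "\<forall>w\<in>V - {Min V}. {Min V, w} \<in> G"
    using \<open>\<forall>w\<in>W. i < w \<and> w \<le> n \<and> {i, w} \<in> G\<close> \<open>Min V = i\<close> V by auto
  ultimately show "V \<in> {V. V \<subseteq> {1..n} \<and> card V = k + 1 \<and>
            (\<forall>i j. {i, j} \<in> star_L k \<longrightarrow>
               {sorted_list_of_set V ! (i - 1), sorted_list_of_set V ! (j - 1)} \<in> G)}"
    using star_copy_iff[OF assms \<open>finite V\<close> \<open>card V = k + 1\<close>] \<open>V \<subseteq> {1..n}\<close> by blast
qed

lemma N_ord_star_L:
  assumes "k > 0"
  shows "N_ord (k + 1) (star_L k) n G = (\<Sum>i\<in>{1..n}. card (up_nbrs G n i) choose k)"
proof -
  let ?copies = "\<lambda>i. insert i ` {W. W \<subseteq> up_nbrs G n i \<and> card W = k}"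
  have finite: "finite (?copies i)" for i
    by (rule finite_imageI, rule finite_subset[of _ "Pow (up_nbrs G n i)"]) auto
  have card: "card (?copies i) = card (up_nbrs G n i) choose k" for i
  proof -
    have "inj_on (insert i) {W. W \<subseteq> up_nbrs G n i \<and> card W = k}"
      by (rule inj_onI) (auto simp: up_nbrs_def insert_ident)
    then show ?thesis by (simp add: card_image n_subsets)
  qed
  have disjoint: "?copies i \<inter> ?copies j = {}" if "i \<noteq> j" for i j
  proof (rule ccontr)
    assume "?copies i \<inter> ?copies j \<noteq> {}"
    then obtain W W' where W: "W \<subseteq> up_nbrs G n i" "W' \<subseteq> up_nbrs G n j"
      and eq: "insert i W = insert j W'"
      by blast
    have "i \<in> W'" and "j \<in> W" using eq that by (metis insert_iff)+
    then have "j < i" and "i < j" using W unfolding up_nbrs_def by auto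
    then show False by simp
  qed
  show ?thesis
    unfolding N_ord_def star_copies_eq[OF assms]
    by (subst card_UN_disjoint) (auto simp: finite card disjoint)
qed

theorem theorem2:
  fixes k n m :: nat and G :: "nat set set"
  assumes "k > 0" and "0 < m" and "m \<le> n choose 2"
    and "ordered_graph n G" and "card G = m"
  shows "N_ord (k + 1) (star_L k) n (S_R n m) \<le> N_ord (k + 1) (star_L k) n G
       \<and> N_ord (k + 1) (star_L k) n G \<le> N_ord (k + 1) (star_L k) n (S_L n m)"
proof -
  let ?a = "a_par n m" and ?b = "b_par n m" and ?d = "\<lambda>H i. card (up_nbrs H n i)"
  have degree_le: "?d H i \<le> n" for H i
    using card_up_nbrs_le[of H n i] by simp
  have edges: "(\<Sum>i\<in>{1..n}. ?d G i) = m"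
    using sum_card_up_nbrs[OF assms(4)] assms(5) by simp
  have "(\<Sum>i\<in>{1..n}. ?d (S_R n m) i choose k) \<le> (\<Sum>i\<in>{1..n}. ?d G i choose k)"
  proof (rule sum_choose_le_if_hinge_sums_le[OF assms(1) _ degree_le degree_le])
    fix s
    show "(\<Sum>i\<in>{1..n}. ?d (S_R n m) i - s) \<le> (\<Sum>i\<in>{1..n}. ?d G i - s)"
    proof (rule hinge_sum_ge_balanced[where a = ?a])
      show "(\<Sum>i\<in>{1..n}. ?d (S_R n m) i) \<le> (\<Sum>i\<in>{1..n}. ?d G i)"
        using sum_card_up_nbrs[OF ordered_graph_S_R[OF assms(3)]] card_S_R_le[OF assms(3)] edges
        by simp
    qed (simp_all add: card_up_nbrs_le card_up_nbrs_S_R_ge card_up_nbrs_S_R_le)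
  qed simp
  moreover have "(\<Sum>i\<in>{1..n}. ?d G i choose k) \<le> (\<Sum>i\<in>{1..n}. ?d (S_L n m) i choose k)"
  proof (rule sum_choose_le_if_hinge_sums_le[OF assms(1) _ degree_le degree_le])
    fix s
    show "(\<Sum>i\<in>{1..n}. ?d G i - s) \<le> (\<Sum>i\<in>{1..n}. ?d (S_L n m) i - s)"
    proof (rule hinge_sum_le_front_loaded)
      show "(\<Sum>i\<in>{1..n}. ?d G i) \<le> f_fun n ?a + ?b"
        using edges f_fun_a_par_add_b_par[of n m] by simp
    qed (simp_all add: card_up_nbrs_le a_par_le card_up_nbrs_S_L_front card_up_nbrs_S_L_next)
  qed simp
  ultimately show ?thesis unfolding N_ord_star_L[OF assms(1)] by simp
qed

end
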